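(* There is a function $f(n)\in\mathcal O(n^3)$ such that in every anonymous hedonic game with $n$ agents in which all agents have strict and naturally single-peaked preferences, every sequence of IS deviations starting from any initial partition has length at most $f(n)$; in particular it terminates in an individually stable partition.
   Context: In an anonymous hedonic game on agents $N=[n]$, each agent $i$ has a weak order $\succsim_i^S$ over sizes $\{1,\dots,n\}$, and compares coalitions containing $i$ by their sizes. Strict means the orders are linear. Naturally single-peaked means: for every agent $i$ and integers $x,y,z\in[n]$ with $x>y>z$ or $z>y>x$, $x\succ_i^S y$ implies $y\succsim_i^S z$. An IS deviation of agent $i$ from partition $\pi$ to $\pi'$ is a move of $i$ alone from $\pi(i)$ into another coalition of $\pi$ or into a new singleton such that $\pi'(i)\succ_i\pi(i)$ and $\pi'(j)\succsim_j\pi(j)$ for every $j\in\pi'(i)\setminus\{i\}$. A partition is individually stable (IS) if no IS deviation is possible from it. *)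

theory Defs
  imports Main "HOL-Library.Disjoint_Sets" "HOL-Library.Landau_Symbols"
begin

text \<open>Agents are 0,...,n-1. A preference profile R assigns to each agent i a relation
  R i on sizes {1..n}; (x, y) \<in> R i means size x is weakly preferred to size y.\<close>

definition weak_size_order :: "nat \<Rightarrow> (nat \<times> nat) set \<Rightarrow> bool" where
  "weak_size_order n r \<longleftrightarrow> r \<subseteq> {1..n} \<times> {1..n} \<and> preorder_on {1..n} r \<and> total_on {1..n} r"

definition wpref :: "(nat \<times> nat) set \<Rightarrow> nat \<Rightarrow> nat \<Rightarrow> bool" where
  "wpref r x y \<longleftrightarrow> (x, y) \<in> r"

definition spref :: "(nat \<times> nat) set \<Rightarrow> nat \<Rightarrow> nat \<Rightarrow> bool" where
  "spref r x y \<longleftrightarrow> (x, y) \<in> r \<and> (y, x) \<notin> r"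

definition strict_anon_game :: "nat \<Rightarrow> (nat \<Rightarrow> (nat \<times> nat) set) \<Rightarrow> bool" where
  "strict_anon_game n R \<longleftrightarrow>
     (\<forall>i<n. weak_size_order n (R i) \<and> antisym (R i))"

definition naturally_single_peaked :: "nat \<Rightarrow> (nat \<Rightarrow> (nat \<times> nat) set) \<Rightarrow> bool" where
  "naturally_single_peaked n R \<longleftrightarrow>
     (\<forall>i<n. \<forall>x\<in>{1..n}. \<forall>y\<in>{1..n}. \<forall>z\<in>{1..n}.
        (x > y \<and> y > z \<or> z > y \<and> y > x) \<longrightarrow> spref (R i) x y \<longrightarrow> wpref (R i) y z)"

definition coal :: "nat set set \<Rightarrow> nat \<Rightarrow> nat set" where
  "coal P i = (THE B. B \<in> P \<and> i \<in> B)"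

text \<open>IS deviation of agent i from P into coalition C (C \<in> P different from i's coalition,
  or C = {} meaning a new singleton), resulting in P'.\<close>
definition IS_deviation :: "nat \<Rightarrow> (nat \<Rightarrow> (nat \<times> nat) set) \<Rightarrow> nat set set \<Rightarrow> nat set set \<Rightarrow> bool" where
  "IS_deviation n R P P' \<longleftrightarrow>
     (\<exists>i<n. \<exists>C \<in> P \<union> {{}}. i \<notin> C \<and>
        P' = ((P - {coal P i, C}) \<union> {coal P i - {i}, insert i C}) - {{}} \<and>
        spref (R i) (card (insert i C)) (card (coal P i)) \<and>
        (\<forall>j\<in>C. wpref (R j) (card (insert i C)) (card C)))"

definition IS_stable :: "nat \<Rightarrow> (nat \<Rightarrow> (nat \<times> nat) set) \<Rightarrow> nat set set \<Rightarrow> bool" where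
  "IS_stable n R P \<longleftrightarrow> \<not> (\<exists>P'. IS_deviation n R P P')"

definition IS_sequence :: "nat \<Rightarrow> (nat \<Rightarrow> (nat \<times> nat) set) \<Rightarrow> (nat \<Rightarrow> nat set set) \<Rightarrow> nat \<Rightarrow> bool" where
  "IS_sequence n R seq k \<longleftrightarrow>
     partition_on {0..<n} (seq 0) \<and> (\<forall>t<k. IS_deviation n R (seq t) (seq (Suc t)))"

end

theory Submission
  imports Defs "HOL-Real_Asymp.Real_Asymp"
begin

text \<open>
  Give every agent j an integer utility u_j on coalition sizes that represents its preference and
  grows by exactly d = n + 1 from each size to the next one below the peak; for strict, naturally
  single-peaked preferences such utilities exist with values of order n^2. Consider the potential
  Phi(P) = sum_j (2 u_j(|P(j)|) - d |P(j)|). When agent i moves from A (of size a) to C (of size c),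
  the c members of C, who must all welcome size c + 1, each gain d; the a - 1 agents left in A lose at
  most d each; and since u_i strictly increases, the term of i grows by at least 2 - d (c + 1 - a).
  Hence Phi grows by at least 2 with every IS deviation, while it ranges over an interval of
  length O(n^3).
\<close>

lemma coal_eqI:
  assumes "partition_on N P" "B \<in> P" "j \<in> B"
  shows "coal P j = B"
  unfolding coal_def
proof (rule the_equality)
  show "B \<in> P \<and> j \<in> B" using assms(2,3) ..
  show "B' = B" if "B' \<in> P \<and> j \<in> B'" for B'
    using that assms disjointD[OF partition_onD2[OF assms(1)]] by blast
qed

lemma coal_in:
  assumes "partition_on N P" "j \<in> N"
  shows "coal P j \<in> P" "j \<in> coal P j"
proof -
  obtain B where "B \<in> P" "j \<in> B"
    using assms partition_onD1 by blast
  then show "coal P j \<in> P" "j \<in> coal P j"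
    using coal_eqI[OF assms(1)] by simp_all
qed

lemma card_coal_range:
  assumes "partition_on {0..<n} P" "j < n"
  shows "card (coal P j) \<in> {1..n}"
proof -
  have "coal P j \<in> P" "j \<in> coal P j"
    using coal_in[OF assms(1)] assms(2) by auto
  moreover from this have "coal P j \<subseteq> {0..<n}"
    using partition_onD1[OF assms(1)] by blast
  ultimately show ?thesis
    using card_mono[of "{0..<n}" "coal P j"] by (auto simp: Suc_le_eq card_gt_0_iff finite_subset)
qed

lemma partition_on_move:
  assumes P: "partition_on N P" and "A \<in> P" "i \<in> A" "C \<in> P \<union> {{}}" "i \<notin> C"
  shows "partition_on N (((P - {A, C}) \<union> {A - {i}, insert i C}) - {{}})"
proof -
  have "A \<noteq> C" using assms by blast
  have disj: "X \<inter> Y = {}" if "X \<in> P" "Y \<in> P" "X \<noteq> Y" for X Y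
    using that disjointD[OF partition_onD2[OF P]] by blast
  show ?thesis
  proof (rule partition_onI)
    show "\<Union> (((P - {A, C}) \<union> {A - {i}, insert i C}) - {{}}) = N"
      using assms partition_onD1[OF P] by auto
  next
    show "disjnt X Y" if "X \<in> ((P - {A, C}) \<union> {A - {i}, insert i C}) - {{}}"
      "Y \<in> ((P - {A, C}) \<union> {A - {i}, insert i C}) - {{}}" "X \<noteq> Y" for X Y
      using that assms \<open>A \<noteq> C\<close> disj unfolding disjnt_def by auto
  qed simp
qed

lemma coal_move:
  assumes P: "partition_on N P" and A: "A \<in> P" "i \<in> A" and C: "C \<in> P \<union> {{}}" "i \<notin> C"
    and j: "j \<in> N"
  shows "coal (((P - {A, C}) \<union> {A - {i}, insert i C}) - {{}}) j =
    (if j = i \<or> j \<in> C then insert i C else if j \<in> A then A - {i} else coal P j)"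
proof -
  let ?P' = "((P - {A, C}) \<union> {A - {i}, insert i C}) - {{}}"
  have P': "partition_on N ?P'"
    using partition_on_move[OF assms(1-5)] .
  show ?thesis
  proof (cases "j = i \<or> j \<in> C")
    case True
    then show ?thesis using coal_eqI[OF P', of "insert i C"] by auto
  next
    case False
    show ?thesis
    proof (cases "j \<in> A")
      case True
      then show ?thesis using False coal_eqI[OF P', of "A - {i}"] by auto
    next
      case False
      have "coal P j \<in> P" "j \<in> coal P j"
        using coal_in[OF P j] by auto
      then show ?thesis
        using False \<open>\<not> (j = i \<or> j \<in> C)\<close> A coal_eqI[OF P', of "coal P j"] by auto
    qed
  qed
qed

lemma IS_deviationE:
  assumes P: "partition_on {0..<n} P" and dev: "IS_deviation n R P P'"
  obtains i A C where "i < n" "A \<in> P" "i \<in> A" "C \<in> P \<union> {{}}" "i \<notin> C" "A \<inter> C = {}"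
    and "partition_on {0..<n} P'"
    and "\<And>j. j < n \<Longrightarrow>
      coal P' j = (if j = i \<or> j \<in> C then insert i C else if j \<in> A then A - {i} else coal P j)"
    and "spref (R i) (Suc (card C)) (card A)"
    and "\<And>j. j \<in> C \<Longrightarrow> wpref (R j) (Suc (card C)) (card C)"
proof -
  obtain i C where i: "i < n" and C: "C \<in> P \<union> {{}}" "i \<notin> C"
    and P': "P' = ((P - {coal P i, C}) \<union> {coal P i - {i}, insert i C}) - {{}}"
    and pref_i: "spref (R i) (card (insert i C)) (card (coal P i))"
    and pref_C: "\<forall>j\<in>C. wpref (R j) (card (insert i C)) (card C)"
    using dev unfolding IS_deviation_def by blast
  have A: "coal P i \<in> P" "i \<in> coal P i"
    using coal_in[OF P] i by auto
  have "C \<subseteq> {0..<n}"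
    using C partition_onD1[OF P] by blast
  then have "finite C"
    by (rule finite_subset) simp
  then have "card (insert i C) = Suc (card C)"
    using C(2) by simp
  moreover have "coal P i \<inter> C = {}"
    using A C disjointD[OF partition_onD2[OF P]] by auto
  ultimately show thesis
    using that[OF i A C] partition_on_move[OF P A C] coal_move[OF P A C] pref_i pref_C
    unfolding P' by auto
qed

lemma sum_move_weights:
  fixes n :: nat and d e :: int
  assumes "A \<subseteq> {0..<n}" "C \<subseteq> {0..<n}" "i \<in> A"
  shows "(\<Sum>j<n. d * of_bool (j \<in> C) - d * of_bool (j \<in> A - {i}) + of_bool (j = i) * e) =
    d * int (card C) - d * (int (card A) - 1) + e"
proof -
  have "{..<n} \<inter> C = C" "{..<n} \<inter> {j. j \<in> A - {i}} = A - {i}" "i < n" "finite A"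
    using assms finite_subset by auto
  moreover from this have "1 \<le> card A"
    using assms(3) by (auto simp: Suc_le_eq card_gt_0_iff)
  ultimately show ?thesis
    using assms(3) by (simp add: sum.distrib sum_subtractf sum_distrib_left[symmetric] of_nat_diff)
qed

locale size_utilities =
  fixes n :: nat and R :: "nat \<Rightarrow> (nat \<times> nat) set"
    and u :: "nat \<Rightarrow> nat \<Rightarrow> int" and d :: int
  assumes utility_strict_mono: "\<And>j s s'. j < n \<Longrightarrow> spref (R j) s' s \<Longrightarrow> u j s < u j s'"
    and utility_grow: "\<And>j c. j < n \<Longrightarrow> wpref (R j) (Suc c) c \<Longrightarrow> u j c + d \<le> u j (Suc c)"
    and utility_shrink: "\<And>j a. j < n \<Longrightarrow> 2 \<le> a \<Longrightarrow> a \<le> n \<Longrightarrow> u j a \<le> u j (a - 1) + d"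
begin

definition agent_potential :: "nat \<Rightarrow> nat \<Rightarrow> int" where
  "agent_potential j s = 2 * u j s - d * int s"

definition potential :: "nat set set \<Rightarrow> int" where
  "potential P = (\<Sum>j<n. agent_potential j (card (coal P j)))"

lemma agent_potential_join:
  "j < n \<Longrightarrow> wpref (R j) (Suc c) c \<Longrightarrow> agent_potential j c + d \<le> agent_potential j (Suc c)"
  using utility_grow[of j c] by (simp add: agent_potential_def algebra_simps)

lemma agent_potential_leave:
  "j < n \<Longrightarrow> 2 \<le> a \<Longrightarrow> a \<le> n \<Longrightarrow> agent_potential j a - d \<le> agent_potential j (a - 1)"
  using utility_shrink[of j a] by (simp add: agent_potential_def algebra_simps of_nat_diff)

lemma agent_potential_move:
  assumes "j < n" "spref (R j) s' s"
  shows "agent_potential j s + 2 - d * (int s' - int s) \<le> agent_potential j s'"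
  using utility_strict_mono[OF assms] by (simp add: agent_potential_def algebra_simps)

lemma potential_IS_deviation:
  assumes P: "partition_on {0..<n} P" and dev: "IS_deviation n R P P'"
  shows "partition_on {0..<n} P'" "potential P + 2 \<le> potential P'"
proof -
  obtain i A C where i: "i < n" and A: "A \<in> P" "i \<in> A" and C: "C \<in> P \<union> {{}}" "i \<notin> C"
    and disj: "A \<inter> C = {}" and P': "partition_on {0..<n} P'"
    and new_coal: "\<And>j. j < n \<Longrightarrow>
      coal P' j = (if j = i \<or> j \<in> C then insert i C else if j \<in> A then A - {i} else coal P j)"
    and pref_i: "spref (R i) (Suc (card C)) (card A)"
    and pref_C: "\<And>j. j \<in> C \<Longrightarrow> wpref (R j) (Suc (card C)) (card C)"
    using IS_deviationE[OF P dev] by blast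
  show "partition_on {0..<n} P'"
    using P' .
  have sub: "A \<subseteq> {0..<n}" "C \<subseteq> {0..<n}"
    using A C partition_onD1[OF P] by blast+
  then have fin: "finite A" "finite C" and "card A \<le> n"
    using finite_subset card_mono[OF _ sub(1)] by auto
  define w where "w j = d * of_bool (j \<in> C) - d * of_bool (j \<in> A - {i}) +
    of_bool (j = i) * (2 - d * (int (Suc (card C)) - int (card A)))" for j
  have change: "agent_potential j (card (coal P j)) + w j \<le> agent_potential j (card (coal P' j))"
    if "j < n" for j
  proof -
    consider "j \<in> C" | "j \<in> A - {i}" | "j = i" | "j \<notin> A" "j \<notin> C"
      by blast
    then show ?thesis
    proof cases
      case 1
      then have "coal P j = C" "coal P' j = insert i C" "j \<notin> A"
        using coal_eqI[OF P] C new_coal[OF that] disj by auto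
      then show ?thesis
        using agent_potential_join[OF that pref_C[OF 1]] 1 A(2) C(2) fin(2) unfolding w_def by auto
    next
      case 2
      then have "coal P j = A" "coal P' j = A - {i}" "2 \<le> card A"
        using coal_eqI[OF P A(1)] new_coal[OF that] disj card_mono[OF fin(1), of "{i, j}"] A(2) by auto
      then show ?thesis
        using agent_potential_leave[OF that _ \<open>card A \<le> n\<close>] 2 A(2) fin(1) disj
        unfolding w_def by auto
    next
      case 3
      then have "coal P j = A" "coal P' j = insert i C"
        using coal_eqI[OF P A] new_coal[OF that] by auto
      then show ?thesis
        using agent_potential_move[OF i pref_i] 3 A(2) C(2) fin(2) unfolding w_def by auto
    next
      case 4
      then show ?thesis
        using new_coal[OF that] A(2) unfolding w_def by auto
    qed
  qed
  have "potential P + 2 = potential P + (\<Sum>j<n. w j)"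
    unfolding w_def sum_move_weights[OF sub A(2)] by (simp add: algebra_simps)
  also have "\<dots> \<le> potential P'"
    unfolding potential_def sum.distrib[symmetric] using change by (intro sum_mono) simp
  finally show "potential P + 2 \<le> potential P'" .
qed

lemma agent_potential_bounds:
  assumes "0 \<le> d" and range: "0 \<le> u j s" "u j s \<le> M" and s: "s \<in> {1..n}"
  shows "- (d * int n) \<le> agent_potential j s" "agent_potential j s \<le> 2 * M"
proof -
  have "0 \<le> d * int s" "d * int s \<le> d * int n"
    using s \<open>0 \<le> d\<close> by (simp_all add: mult_left_mono)
  then show "- (d * int n) \<le> agent_potential j s" "agent_potential j s \<le> 2 * M"
    using range unfolding agent_potential_def by linarith+
qed

lemma potential_bounds:
  assumes P: "partition_on {0..<n} P" and "0 \<le> d"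
    and range: "\<And>j s. j < n \<Longrightarrow> s \<in> {1..n} \<Longrightarrow> 0 \<le> u j s \<and> u j s \<le> M"
  shows "int n * - (d * int n) \<le> potential P" "potential P \<le> int n * (2 * M)"
proof -
  have lower: "- (d * int n) \<le> agent_potential j (card (coal P j))"
    and upper: "agent_potential j (card (coal P j)) \<le> 2 * M"
    if "j < n" for j
    using agent_potential_bounds[OF \<open>0 \<le> d\<close> _ _ card_coal_range[OF P that]]
      range[OF that card_coal_range[OF P that]] by auto
  show "int n * - (d * int n) \<le> potential P"
    unfolding potential_def by (rule sum_bounded_below[of "{..<n}", simplified]) (simp add: lower)
  show "potential P \<le> int n * (2 * M)"
    unfolding potential_def by (rule sum_bounded_above[of "{..<n}", simplified]) (simp add: upper)
qed

lemma IS_sequence_length_le: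
  assumes "0 \<le> d" and range: "\<And>j s. j < n \<Longrightarrow> s \<in> {1..n} \<Longrightarrow> 0 \<le> u j s \<and> u j s \<le> M"
    and seq: "IS_sequence n R seq k"
  shows "2 * int k \<le> int n * (2 * M + d * int n)"
proof -
  have invariant: "partition_on {0..<n} (seq t) \<and> potential (seq 0) + 2 * int t \<le> potential (seq t)"
    if "t \<le> k" for t
    using that
  proof (induction t)
    case 0
    then show ?case using seq unfolding IS_sequence_def by simp
  next
    case (Suc t)
    then have "IS_deviation n R (seq t) (seq (Suc t))"
      using seq unfolding IS_sequence_def by simp
    then show ?case
      using Suc potential_IS_deviation[of "seq t" "seq (Suc t)"] by force
  qed
  then show ?thesis
    using potential_bounds[OF _ assms(1,2), of "seq 0"] potential_bounds[OF _ assms(1,2), of "seq k"]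
    by (fastforce simp: algebra_simps)
qed

end

locale single_peaked_size_order =
  fixes n :: nat and r :: "(nat \<times> nat) set"
  assumes linear: "linear_order_on {1..n} r"
    and single_peaked: "\<And>x y z. x \<in> {1..n} \<Longrightarrow> y \<in> {1..n} \<Longrightarrow> z \<in> {1..n} \<Longrightarrow>
      x > y \<and> y > z \<or> z > y \<and> y > x \<Longrightarrow> spref r x y \<Longrightarrow> wpref r y z"
    and nonempty: "0 < n"
begin

lemma pref_range: "(x, y) \<in> r \<Longrightarrow> x \<in> {1..n} \<and> y \<in> {1..n}"
  using linear by (auto simp: linear_order_on_def partial_order_on_def preorder_on_def)

lemma pref_refl: "x \<in> {1..n} \<Longrightarrow> (x, x) \<in> r"
  using linear by (auto simp: linear_order_on_def partial_order_on_def preorder_on_def refl_on_def)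

lemma pref_trans: "(x, y) \<in> r \<Longrightarrow> (y, z) \<in> r \<Longrightarrow> (x, z) \<in> r"
  using linear by (auto simp: linear_order_on_def partial_order_on_def preorder_on_def dest: transD)

lemma spref_iff: "spref r x y \<longleftrightarrow> (x, y) \<in> r \<and> x \<noteq> y"
  using linear by (auto simp: spref_def linear_order_on_def partial_order_on_def dest: antisymD)

text \<open>(x, y) \<in> r means that x is weakly preferred to y, so the r-least size is the top choice.\<close>

definition peak :: nat where
  "peak = wo_rel.minim r {1..n}"

lemma peak: "peak \<in> {1..n}" "t \<in> {1..n} \<Longrightarrow> (peak, t) \<in> r"
proof -
  have "finite r"
    using pref_range by (intro finite_subset[of r "{1..n} \<times> {1..n}"]) auto
  then have "well_order_on {1..n} r"
    using linear linear_order_on_well_order_on by blast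
  then have wo: "wo_rel r" and field: "Field r = {1..n}"
    using well_order_on_Well_order wo_rel_def by auto
  show "peak \<in> {1..n}"
    using wo_rel.minim_in[OF wo, of "{1..n}"] field nonempty unfolding peak_def by simp
  show "t \<in> {1..n} \<Longrightarrow> (peak, t) \<in> r"
    using wo_rel.minim_least[OF wo, of "{1..n}" t] field unfolding peak_def by simp
qed

lemma spref_towards_peak:
  assumes "t \<in> {1..n}" "t < s \<and> s \<le> peak \<or> peak \<le> s \<and> s < t"
  shows "spref r s t"
proof (cases "s = peak")
  case True
  then show ?thesis using peak assms spref_iff by auto
next
  case False
  have s: "s \<in> {1..n}"
    using assms peak(1) by auto
  then have "spref r peak s"
    using peak False spref_iff by auto
  then have "wpref r s t"
    using single_peaked[OF peak(1) s assms(1)] assms False by auto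
  then show ?thesis
    using assms spref_iff wpref_def by auto
qed

definition left_rank :: "nat \<Rightarrow> nat" where
  "left_rank s = card {t \<in> {1..peak}. (s, t) \<in> r}"

lemma left_rank_below_peak:
  assumes "s \<in> {1..peak}"
  shows "left_rank s = s"
proof -
  have "{t \<in> {1..peak}. (s, t) \<in> r} = {1..s}"
  proof (intro set_eqI iffI)
    fix t
    assume "t \<in> {t \<in> {1..peak}. (s, t) \<in> r}"
    moreover have "\<not> spref r t s" if "(s, t) \<in> r"
      using that by (auto simp: spref_def)
    ultimately show "t \<in> {1..s}"
      using spref_towards_peak[of s t] assms peak(1) by (cases "s < t") auto
  next
    fix t
    assume "t \<in> {1..s}"
    then show "t \<in> {t \<in> {1..peak}. (s, t) \<in> r}"
      using spref_towards_peak[of t s] pref_refl assms peak(1) spref_def by (cases "t = s") auto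
  qed
  then show ?thesis
    unfolding left_rank_def by simp
qed

lemma left_rank_mono: "(s, s') \<in> r \<Longrightarrow> left_rank s' \<le> left_rank s"
  unfolding left_rank_def by (rule card_mono) (auto intro: pref_trans)

lemma left_rank_le_peak: "left_rank s \<le> peak"
  unfolding left_rank_def by (rule order_trans[OF card_mono[of "{1..peak}"]]) auto

text \<open>
  Below the peak, left_rank s = s, so the score climbs in steps of n + 1 there. Beyond the peak the
  term n + 1 - s, which is at most n, separates sizes with the same left_rank in favour of the
  smaller (hence preferred) one.
\<close>

definition score :: "nat \<Rightarrow> nat" where
  "score s = (n + 1) * left_rank s + (if peak < s then n + 1 - s else 0)"

lemma score_below_peak: "s \<in> {1..peak} \<Longrightarrow> score s = (n + 1) * s"
  by (simp add: score_def left_rank_below_peak)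

lemma score_le: "score s \<le> n * (n + 2)"
proof -
  have "(n + 1) * left_rank s \<le> (n + 1) * n"
    using left_rank_le_peak[of s] peak(1) by (intro mult_left_mono) auto
  then show ?thesis
    unfolding score_def by (auto simp: algebra_simps)
qed

lemma score_strict_mono:
  assumes "spref r s s'"
  shows "score s' < score s"
proof -
  have pref: "(s, s') \<in> r" "(s', s) \<notin> r" "s \<noteq> s'" and range: "s \<in> {1..n}" "s' \<in> {1..n}"
    using assms pref_range by (auto simp: spref_def)
  have rank: "(n + 1) * left_rank s' \<le> (n + 1) * left_rank s"
    using left_rank_mono[OF pref(1)] by (intro mult_left_mono) auto
  consider "s \<le> peak" | "peak < s" "s' \<le> peak" | "peak < s" "peak < s'"
    by linarith
  then show ?thesis
  proof cases
    case 1
    have "left_rank s' < left_rank s"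
      unfolding left_rank_def using 1 range pref pref_refl
      by (intro psubset_card_mono) (auto intro: pref_trans)
    then have "(n + 1) * (left_rank s' + 1) \<le> (n + 1) * left_rank s"
      by (intro mult_left_mono) auto
    then show ?thesis
      using 1 range unfolding score_def by auto
  next
    case 2
    then show ?thesis
      using rank range unfolding score_def by auto
  next
    case 3
    have "s < s'"
      using spref_towards_peak[of s s'] 3 range pref by (cases "s' < s") (auto simp: spref_def)
    then show ?thesis
      using 3 rank range unfolding score_def by auto
  qed
qed

lemma score_grow:
  assumes "wpref r (Suc c) c"
  shows "score c + (n + 1) \<le> score (Suc c)"
proof -
  have "(Suc c, c) \<in> r" "c \<in> {1..n}" "Suc c \<in> {1..n}"
    using assms pref_range unfolding wpref_def by auto
  then have "Suc c \<le> peak"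
    using spref_towards_peak[of "Suc c" c] by (metis lessI not_less_eq_eq spref_def)
  then show ?thesis
    using \<open>c \<in> {1..n}\<close> score_below_peak[of c] score_below_peak[of "Suc c"] by simp
qed

lemma score_shrink:
  assumes "2 \<le> a" "a \<le> n"
  shows "score a \<le> score (a - 1) + (n + 1)"
proof (cases "a \<le> peak")
  case True
  then have "score a = score (a - 1) + (n + 1)"
    using assms score_below_peak[of a] score_below_peak[of "a - 1"] by (cases a) auto
  then show ?thesis
    by simp
next
  case False
  then have "spref r (a - 1) a"
    using assms by (intro spref_towards_peak) auto
  then show ?thesis
    using score_strict_mono by fastforce
qed

end

lemma single_peaked_size_order_agent:
  assumes "strict_anon_game n R" "naturally_single_peaked n R" "j < n"
  shows "single_peaked_size_order n (R j)"
  using assms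
  unfolding single_peaked_size_order_def strict_anon_game_def naturally_single_peaked_def
    weak_size_order_def linear_order_on_def partial_order_on_def
  by auto

lemma size_utilities_single_peaked:
  assumes "strict_anon_game n R" "naturally_single_peaked n R"
  shows "size_utilities n R (\<lambda>j s. int (single_peaked_size_order.score n (R j) s)) (int n + 1)"
proof
  fix j
  assume "j < n"
  then interpret single_peaked_size_order n "R j"
    using single_peaked_size_order_agent[OF assms] by blast
  show "int (score s) < int (score s')" if "spref (R j) s' s" for s s'
    using score_strict_mono[OF that] by simp
  show "int (score c) + (int n + 1) \<le> int (score (Suc c))" if "wpref (R j) (Suc c) c" for c
    using score_grow[OF that] by linarith
  show "int (score a) \<le> int (score (a - 1)) + (int n + 1)" if "2 \<le> a" "a \<le> n" for a
    using score_shrink[OF that] by linarith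
qed

theorem theorem3p5:
  shows "\<exists>f :: nat \<Rightarrow> nat. (\<lambda>n. real (f n)) \<in> O(\<lambda>n. real n ^ 3) \<and>
    (\<forall>n R. strict_anon_game n R \<and> naturally_single_peaked n R \<longrightarrow>
       (\<forall>seq k. IS_sequence n R seq k \<longrightarrow> k \<le> f n))"
proof (intro exI conjI allI impI)
  show "(\<lambda>n. real (n\<^sup>2 * (3 * n + 5))) \<in> O(\<lambda>n. real n ^ 3)"
    by real_asymp
  fix n R seq k
  assume "strict_anon_game n R \<and> naturally_single_peaked n R" and seq: "IS_sequence n R seq k"
  then have game: "strict_anon_game n R" "naturally_single_peaked n R"
    by auto
  interpret size_utilities n R "\<lambda>j s. int (single_peaked_size_order.score n (R j) s)" "int n + 1"
    using size_utilities_single_peaked[OF game] .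
  have "int (single_peaked_size_order.score n (R j) s) \<le> int (n * (n + 2))" if "j < n" for j s
    unfolding of_nat_le_iff
    by (rule single_peaked_size_order.score_le[OF single_peaked_size_order_agent[OF game that]])
  then have "2 * int k \<le> int n * (2 * int (n * (n + 2)) + (int n + 1) * int n)"
    by (intro IS_sequence_length_le[OF _ _ seq]) auto
  also have "\<dots> = int (n\<^sup>2 * (3 * n + 5))"
    by (simp add: algebra_simps power2_eq_square)
  finally show "k \<le> n\<^sup>2 * (3 * n + 5)"
    by linarith
qed

end
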